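(* Let $\mathfrak L=\mathbb V\oplus\mathbb W$ be a color gLt-algebra admitting a quasi-multiplicative basis $\mathfrak B=\{e_i\}_{i\in I}$ of $\mathbb W\neq 0$. The relation $\sim$ on $I$ defined by $i\sim j$ if and only if $i$ is connected to $j$ is an equivalence relation.
   Context: Let $\mathbb F$ be a field, $\mathbb G$ an abelian group, $n\ge 2$, and $\epsilon:\mathbb G\times\mathbb G\to\mathbb F\setminus\{0\}$ a bicharacter ($\epsilon(k,g+h)=\epsilon(k,g)\epsilon(k,h)$, $\epsilon(g+h,k)=\epsilon(g,k)\epsilon(h,k)$, $\epsilon(g,h)\epsilon(h,g)=1$). A graded $n$-ary algebra is a $\mathbb G$-graded vector space $\mathfrak L=\bigoplus_{g\in\mathbb G}\mathfrak L_g$ with an $n$-linear map $\langle\cdot,\dots,\cdot\rangle:\mathfrak L^n\to\mathfrak L$ such that $\langle\mathfrak L_{g_1},\dots,\mathfrak L_{g_n}\rangle\subset\mathfrak L_{g_1+\dots+g_n}$. For $\sigma\in\mathbb S_n$ write $\langle x_1,\dots,x_n\rangle_\sigma:=\langle x_{\sigma(1)},\dots,x_{\sigma(n)}\rangle$; for subsets $A_1,\dots,A_n$, $\langle A_1,\dots,A_n\rangle_\sigma$ denotes the linear span of all $\langle x_1,\dots,x_n\rangle_\sigma$ with $x_r\in A_r$. A color gLt-algebra is a graded $n$-ary algebra satisfying, for each $k=1,\dots,n$ and fixed scalars $\alpha^{\sigma_1,\sigma_2}_{i,j,k}\in\mathbb F$, the color version (each term on the right multiplied by the product of values of $\epsilon$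 on the degrees of the homogeneous arguments transposed in passing from the left-hand order to the order of that term) of the identity $\langle y_1,\dots,y_{k-1},\langle x_1,\dots,x_n\rangle,y_k,\dots,y_{n-1}\rangle=\sum_{1\le i,j\le n,\,\sigma_1\in\mathbb S_n,\,\sigma_2\in\mathbb S_{n-1}}\alpha^{\sigma_1,\sigma_2}_{i,j,k}\langle x_{\sigma_1(1)},\dots,x_{\sigma_1(i-1)},\langle y_{\sigma_2(1)},\dots,y_{\sigma_2(j-1)},x_{\sigma_1(i)},y_{\sigma_2(j)},\dots,y_{\sigma_2(n-1)}\rangle,x_{\sigma_1(i+1)},\dots,x_{\sigma_1(n)}\rangle$. $\mathfrak L$ admits a quasi-multiplicative basis if $\mathfrak L=\mathbb V\oplus\mathbb W$ with $\mathbb V$, $\mathbb W\ne0$ graded subspaces and $\mathfrak B=\{e_i\}_{i\in I}$ a basis of homogeneous elements of $\mathbb W$ such that: (1) for $i_1,\dots,i_n\in I$, either $\langle e_{i_1},\dots,e_{i_n}\rangle\in\mathbb Fe_j$ for some $j\in I$ or $\langle e_{i_1},\dots,e_{i_n}\rangle\in\mathbb V$; (2) for $0<k<n$, $i_1,\dots,i_k\in I$ and $\sigma\in\mathbb S_n$, $\langle e_{i_1},\dots,e_{i_k},\mathbb V,\dots,\mathbb V\rangle_\sigma\subset\mathbb Fe_{j_\sigma}$ for some $j_\sigma\in I$; (3) either $\langle\mathbb V,\dots,\mathbb V\rangle\subset\mathbb Fe_j$ for some $j\in I$ or $\langle\mathbb V,\dots,\mathbb V\rangle\subset\mathbb V$.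 Index maps: let $v$ be a symbol not in $I$, $\mathfrak I:=I\,\dot\cup\,\{v\}$; for each $j\in\mathfrak I$ take a new symbol $\overline j$, $\overline I:=\{\overline i:i\in I\}$, $\overline{\mathfrak I}:=\overline I\,\dot\cup\,\{\overline v\}$; set $\overline{(\overline j)}:=j$, $\overline J:=\{\overline j:j\in J\}$ for a set $J$ of symbols ($\overline\emptyset=\emptyset$). Put $u_j:=e_j$ for $j\in I$ and $u_v:=\mathbb V$. For $\sigma\in\mathbb S_n$ and $(j_1,\dots,j_n)\in\mathfrak I^n$ let $a_\sigma(j_1,\dots,j_n)=\{r\}$ if $r\in I$ and $0\ne\langle u_{j_1},\dots,u_{j_n}\rangle_\sigma\subset\mathbb Fe_r$, $=\{v\}$ if $0\ne\langle u_{j_1},\dots,u_{j_n}\rangle_\sigma\subset\mathbb V$, and $=\emptyset$ otherwise. For $j,j_2,\dots,j_n\in\mathfrak I$ let $b_\sigma(j,\overline j_2,\dots,\overline j_n):=\{x\in\mathfrak I: a_\sigma(x,j_2,\dots,j_n)=\{j\}\}$. Define $\mu$ on $(\mathfrak I\,\dot\cup\,\overline{\mathfrak I})\times(\mathfrak I^{n-1}\,\dot\cup\,\overline{\mathfrak I}^{n-1})$ with values subsets of $\mathfrak I$ by: $\mu(j,j_1,\dots,j_{n-1})=\bigcup_{\sigma\in\mathbb S_n}a_\sigma(j,j_1,\dots,j_{n-1})$ for $j,j_1,\dots,j_{n-1}\in\mathfrak I$; $\mu(j,\overline j_1,\dots,\overline j_{n-1})=\bigcup_{\sigma\in\mathbb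 S_n}b_\sigma(j,\overline j_1,\dots,\overline j_{n-1})$ for $j,j_1,\dots,j_{n-1}\in\mathfrak I$; $\mu(\overline j,j_1,\dots,j_{n-1})=\bigcup_{1\le k\le n-1,\ \sigma\in\mathbb S_n}b_\sigma(j_k,\overline j,\overline j_1,\dots,\overline j_{k-1},\overline j_{k+1},\dots,\overline j_{n-1})$ for $j,j_1,\dots,j_{n-1}\in\mathfrak I$; and $\mu(\overline j,\overline j_1,\dots,\overline j_{n-1})=\emptyset$. Define $\phi$ on pairs $(J,X)$ with $J\subset I\,\dot\cup\,\overline I$ and $X\in\mathfrak I^{n-1}\,\dot\cup\,\overline{\mathfrak I}^{n-1}$ by $\phi(\emptyset,X)=\emptyset$ and, for $J\ne\emptyset$, $\phi(J,X):=K\cup\overline K$ where $K:=\big(\bigcup_{j\in J}\mu(j,X)\big)\setminus\{v\}$. Connections: for distinct $i,j\in I$, $i$ is connected to $j$ if there exist $t\ge1$, $X_1,\dots,X_t\in\mathfrak I^{n-1}\,\dot\cup\,\overline{\mathfrak I}^{n-1}$ and $\widetilde i\in\{i,\overline i\}$ such that $\phi(\{\widetilde i\},X_1)\ne\emptyset$, $\phi(\phi(\{\widetilde i\},X_1),X_2)\neq\emptyset$, …, $\phi(\cdots\phi(\{\widetilde i\},X_1)\cdots,X_{t-1})\ne\emptyset$, and $j\in\phi(\cdots\phi(\phi(\{\widetilde i\},X_1),X_2)\cdots,X_t)$. By convention every $i\in I$ is connected to itself. *)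

theory Defs
  imports Main "HOL.Vector_Spaces" "HOL-Combinatorics.Permutations"
begin

definition bicharacter :: "('g::ab_group_add \<Rightarrow> 'g \<Rightarrow> 'k::field) \<Rightarrow> bool" where
  "bicharacter eps \<longleftrightarrow>
     (\<forall>g h. eps g h \<noteq> 0) \<and>
     (\<forall>k g h. eps k (g + h) = eps k g * eps k h) \<and>
     (\<forall>g h k. eps (g + h) k = eps g k * eps h k) \<and>
     (\<forall>g h. eps g h * eps h g = 1)"

definition is_grading :: "('k::field \<Rightarrow> 'v::ab_group_add \<Rightarrow> 'v) \<Rightarrow> ('g \<Rightarrow> 'v set) \<Rightarrow> bool" where
  "is_grading scale Lg \<longleftrightarrow>
     (\<forall>g. module.subspace scale (Lg g)) \<and>
     (\<forall>x. \<exists>f. finite {g. f g \<noteq> 0} \<and> (\<forall>g. f g \<in> Lg g) \<and> x = (\<Sum>g\<in>{g. f g \<noteq> 0}. f g)) \<and>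
     (\<forall>f. finite {g. f g \<noteq> 0} \<and> (\<forall>g. f g \<in> Lg g) \<and> (\<Sum>g\<in>{g. f g \<noteq> 0}. f g) = 0
          \<longrightarrow> (\<forall>g. f g = 0))"

definition graded_subspace :: "('k::field \<Rightarrow> 'v::ab_group_add \<Rightarrow> 'v) \<Rightarrow> ('g \<Rightarrow> 'v set) \<Rightarrow> 'v set \<Rightarrow> bool" where
  "graded_subspace scale Lg S \<longleftrightarrow>
     module.subspace scale S \<and>
     (\<forall>x\<in>S. \<exists>f. finite {g. f g \<noteq> 0} \<and> (\<forall>g. f g \<in> Lg g \<inter> S) \<and> x = (\<Sum>g\<in>{g. f g \<noteq> 0}. f g))"

definition graded_nary_algebra ::
  "('k::field \<Rightarrow> 'v::ab_group_add \<Rightarrow> 'v) \<Rightarrow> ('g::ab_group_add \<Rightarrow> 'v set) \<Rightarrow> nat \<Rightarrow> ('v list \<Rightarrow> 'v) \<Rightarrow> bool" where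
  "graded_nary_algebra scale Lg n mul \<longleftrightarrow>
     vector_space scale \<and> n \<ge> 2 \<and> is_grading scale Lg \<and>
     (\<forall>xs p a b u w. length xs = n \<and> p < n \<longrightarrow>
        mul (xs[p := scale a u + scale b w]) = scale a (mul (xs[p := u])) + scale b (mul (xs[p := w]))) \<and>
     (\<forall>xs gs. length xs = n \<and> length gs = n \<and> (\<forall>r<n. xs ! r \<in> Lg (gs ! r))
        \<longrightarrow> mul xs \<in> Lg (sum_list gs))"

datatype tag = XT nat | YT nat

fun tagdeg :: "'g list \<Rightarrow> 'g list \<Rightarrow> tag \<Rightarrow> 'g" where
  "tagdeg gx gy (XT r) = gx ! r"
| "tagdeg gx gy (YT r) = gy ! r"

(* order of the arguments on the left-hand side (inner bracket at position k, 0-based) *)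
definition lhs_order :: "nat \<Rightarrow> nat \<Rightarrow> tag list" where
  "lhs_order n k = map YT [0..<k] @ map XT [0..<n] @ map YT [k..<n-1]"

(* order of the arguments in the term indexed by i, j (0-based), sigma1, sigma2 *)
definition rhs_order :: "nat \<Rightarrow> nat \<Rightarrow> nat \<Rightarrow> (nat \<Rightarrow> nat) \<Rightarrow> (nat \<Rightarrow> nat) \<Rightarrow> tag list" where
  "rhs_order n i j s1 s2 =
     map (XT \<circ> s1) [0..<i] @ map (YT \<circ> s2) [0..<j] @ [XT (s1 i)] @ map (YT \<circ> s2) [j..<n-1]
     @ map (XT \<circ> s1) [Suc i..<n]"

definition inv_pairs :: "'a list \<Rightarrow> 'a list \<Rightarrow> ('a \<times> 'a) set" where
  "inv_pairs L R = {(a, b). \<exists>p q. p < q \<and> q < length L \<and> L ! p = a \<and> L ! q = b \<and>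
                     (\<exists>p' q'. q' < p' \<and> p' < length R \<and> R ! p' = a \<and> R ! q' = b)}"

definition color_factor :: "('g \<Rightarrow> 'g \<Rightarrow> 'k::field) \<Rightarrow> ('a \<Rightarrow> 'g) \<Rightarrow> 'a list \<Rightarrow> 'a list \<Rightarrow> 'k" where
  "color_factor eps deg L R = (\<Prod>(a, b)\<in>inv_pairs L R. eps (deg a) (deg b))"

definition perms :: "nat \<Rightarrow> (nat \<Rightarrow> nat) set" where
  "perms m = {s. s permutes {..<m}}"

definition color_gLt_algebra ::
  "('k::field \<Rightarrow> 'v::ab_group_add \<Rightarrow> 'v) \<Rightarrow> ('g::ab_group_add \<Rightarrow> 'v set) \<Rightarrow> ('g \<Rightarrow> 'g \<Rightarrow> 'k)
   \<Rightarrow> nat \<Rightarrow> ('v list \<Rightarrow> 'v) \<Rightarrow> (nat \<Rightarrow> nat \<Rightarrow> nat \<Rightarrow> (nat \<Rightarrow> nat) \<Rightarrow> (nat \<Rightarrow> nat) \<Rightarrow> 'k) \<Rightarrow> bool" where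
  "color_gLt_algebra scale Lg eps n mul alpha \<longleftrightarrow>
     graded_nary_algebra scale Lg n mul \<and>
     (\<forall>k<n. \<forall>xs ys gx gy.
        length xs = n \<and> length ys = n - 1 \<and> length gx = n \<and> length gy = n - 1 \<and>
        (\<forall>r<n. xs ! r \<in> Lg (gx ! r)) \<and> (\<forall>r<n-1. ys ! r \<in> Lg (gy ! r)) \<longrightarrow>
        mul (take k ys @ [mul xs] @ drop k ys) =
          (\<Sum>i<n. \<Sum>j<n. \<Sum>s1\<in>perms n. \<Sum>s2\<in>perms (n - 1).
             scale (alpha i j k s1 s2 *
                    color_factor eps (tagdeg gx gy) (lhs_order n k) (rhs_order n i j s1 s2))
               (mul (map (\<lambda>r. xs ! s1 r) [0..<i]
                      @ [mul (map (\<lambda>r. ys ! s2 r) [0..<j] @ [xs ! s1 i] @ map (\<lambda>r. ys ! s2 r) [j..<n-1])]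
                      @ map (\<lambda>r. xs ! s1 r) [Suc i..<n]))))"

(* <A_1,...,A_n>_sigma : span of all <x_{sigma(1)},...,x_{sigma(n)}> with x_r in A_r (0-based) *)
definition prodS :: "('k::field \<Rightarrow> 'v::ab_group_add \<Rightarrow> 'v) \<Rightarrow> nat \<Rightarrow> ('v list \<Rightarrow> 'v) \<Rightarrow> (nat \<Rightarrow> nat)
                      \<Rightarrow> 'v set list \<Rightarrow> 'v set" where
  "prodS scale n mul s As = module.span scale
     {mul (map (\<lambda>r. xs ! s r) [0..<n]) | xs. length xs = n \<and> (\<forall>r<n. xs ! r \<in> As ! r)}"

definition quasi_mult_basis ::
  "('k::field \<Rightarrow> 'v::ab_group_add \<Rightarrow> 'v) \<Rightarrow> ('g \<Rightarrow> 'v set) \<Rightarrow> nat \<Rightarrow> ('v list \<Rightarrow> 'v)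
   \<Rightarrow> 'v set \<Rightarrow> 'v set \<Rightarrow> ('i \<Rightarrow> 'v) \<Rightarrow> bool" where
  "quasi_mult_basis scale Lg n mul V W e \<longleftrightarrow>
     graded_subspace scale Lg V \<and> graded_subspace scale Lg W \<and>
     V \<noteq> {0} \<and> W \<noteq> {0} \<and> V \<inter> W = {0} \<and> (\<forall>x. \<exists>a\<in>V. \<exists>b\<in>W. x = a + b) \<and>
     inj e \<and> \<not> module.dependent scale (range e) \<and> module.span scale (range e) = W \<and>
     (\<forall>i. \<exists>g. e i \<in> Lg g) \<and>
     (\<forall>ids. length ids = n \<longrightarrow>
        (\<exists>j. mul (map e ids) \<in> module.span scale {e j}) \<or> mul (map e ids) \<in> V) \<and>
     (\<forall>k ids s. 0 < k \<and> k < n \<and> length ids = k \<and> s permutes {..<n} \<longrightarrow>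
        (\<exists>j. prodS scale n mul s (map (\<lambda>i. {e i}) ids @ replicate (n - k) V) \<subseteq> module.span scale {e j})) \<and>
     ((\<exists>j. prodS scale n mul id (replicate n V) \<subseteq> module.span scale {e j}) \<or>
      prodS scale n mul id (replicate n V) \<subseteq> V)"

(* the symbols of I together with v *)
datatype 'i idx = Idx 'i | VV
(* unbarred / barred symbols *)
datatype 'a barred = Pl 'a | Br 'a
(* (n-1)-tuples of unbarred / barred symbols *)
datatype 'a tup = Tup "'a list" | BTup "'a list"

fun tuplen :: "'a tup \<Rightarrow> nat" where
  "tuplen (Tup l) = length l"
| "tuplen (BTup l) = length l"

fun uset :: "'v set \<Rightarrow> ('i \<Rightarrow> 'v) \<Rightarrow> 'i idx \<Rightarrow> 'v set" where
  "uset V e (Idx i) = {e i}"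
| "uset V e VV = V"

definition aS :: "('k::field \<Rightarrow> 'v::ab_group_add \<Rightarrow> 'v) \<Rightarrow> nat \<Rightarrow> ('v list \<Rightarrow> 'v) \<Rightarrow> 'v set \<Rightarrow> ('i \<Rightarrow> 'v)
                  \<Rightarrow> (nat \<Rightarrow> nat) \<Rightarrow> 'i idx list \<Rightarrow> 'i idx set" where
  "aS scale n mul V e s js =
     (let P = prodS scale n mul s (map (uset V e) js) in
       {Idx r | r. P \<noteq> {0} \<and> P \<subseteq> module.span scale {e r}} \<union> (if P \<noteq> {0} \<and> P \<subseteq> V then {VV} else {}))"

definition bS :: "('k::field \<Rightarrow> 'v::ab_group_add \<Rightarrow> 'v) \<Rightarrow> nat \<Rightarrow> ('v list \<Rightarrow> 'v) \<Rightarrow> 'v set \<Rightarrow> ('i \<Rightarrow> 'v)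
                  \<Rightarrow> (nat \<Rightarrow> nat) \<Rightarrow> 'i idx \<Rightarrow> 'i idx list \<Rightarrow> 'i idx set" where
  "bS scale n mul V e s j js = {x. aS scale n mul V e s (x # js) = {j}}"

fun muS :: "('k::field \<Rightarrow> 'v::ab_group_add \<Rightarrow> 'v) \<Rightarrow> nat \<Rightarrow> ('v list \<Rightarrow> 'v) \<Rightarrow> 'v set \<Rightarrow> ('i \<Rightarrow> 'v)
            \<Rightarrow> 'i idx barred \<Rightarrow> 'i idx tup \<Rightarrow> 'i idx set" where
  "muS scale n mul V e (Pl j) (Tup js) = (\<Union>s\<in>perms n. aS scale n mul V e s (j # js))"
| "muS scale n mul V e (Pl j) (BTup js) = (\<Union>s\<in>perms n. bS scale n mul V e s j js)"
| "muS scale n mul V e (Br j) (Tup js) =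
     (\<Union>k<n-1. \<Union>s\<in>perms n. bS scale n mul V e s (js ! k) (j # take k js @ drop (Suc k) js))"
| "muS scale n mul V e (Br j) (BTup js) = {}"

definition phiS :: "('k::field \<Rightarrow> 'v::ab_group_add \<Rightarrow> 'v) \<Rightarrow> nat \<Rightarrow> ('v list \<Rightarrow> 'v) \<Rightarrow> 'v set \<Rightarrow> ('i \<Rightarrow> 'v)
                    \<Rightarrow> 'i barred set \<Rightarrow> 'i idx tup \<Rightarrow> 'i barred set" where
  "phiS scale n mul V e J X =
     (if J = {} then {}
      else (let K = {i. \<exists>jj\<in>J. Idx i \<in> muS scale n mul V e (map_barred Idx jj) X} in Pl ` K \<union> Br ` K))"

fun phi_iter :: "('k::field \<Rightarrow> 'v::ab_group_add \<Rightarrow> 'v) \<Rightarrow> nat \<Rightarrow> ('v list \<Rightarrow> 'v) \<Rightarrow> 'v set \<Rightarrow> ('i \<Rightarrow> 'v)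
                 \<Rightarrow> 'i barred set \<Rightarrow> 'i idx tup list \<Rightarrow> 'i barred set" where
  "phi_iter scale n mul V e J [] = J"
| "phi_iter scale n mul V e J (X # Xs) = phi_iter scale n mul V e (phiS scale n mul V e J X) Xs"

definition connected :: "('k::field \<Rightarrow> 'v::ab_group_add \<Rightarrow> 'v) \<Rightarrow> nat \<Rightarrow> ('v list \<Rightarrow> 'v) \<Rightarrow> 'v set \<Rightarrow> ('i \<Rightarrow> 'v)
                         \<Rightarrow> 'i \<Rightarrow> 'i \<Rightarrow> bool" where
  "connected scale n mul V e i j \<longleftrightarrow>
     i = j \<or>
     (\<exists>Xs it. Xs \<noteq> [] \<and> (\<forall>X\<in>set Xs. tuplen X = n - 1) \<and> it \<in> {Pl i, Br i} \<and>
        (\<forall>s. 1 \<le> s \<and> s < length Xs \<longrightarrow> phi_iter scale n mul V e {it} (take s Xs) \<noteq> {}) \<and>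
        Pl j \<in> phi_iter scale n mul V e {it} Xs)"

end

theory Submission
  imports Defs
begin

text \<open>Connectedness is reachability along the one-step relation in which \<open>j\<close> follows \<open>i\<close> if
  \<open>j \<in> \<mu>(i, X)\<close> or \<open>j \<in> \<mu>(i\<^sup>-, X)\<close> for some \<open>X\<close>, so it suffices that this relation is symmetric. It is,
  because the barred index maps invert the unbarred ones: \<open>a\<^sub>\<sigma>\<close> takes at most one value, so
  \<open>r' \<in> a\<^sub>\<sigma>(r, X)\<close> means \<open>r \<in> b\<^sub>\<sigma>(r', X\<^sup>-)\<close>; and for a barred first argument,
  composing \<open>\<sigma>\<close> with the transposition of the first two slots exchanges the roles of the two
  indices inside \<open>b\<^sub>\<sigma>\<close>.\<close>

definition prod_generators :: "nat \<Rightarrow> ('v list \<Rightarrow> 'v) \<Rightarrow> (nat \<Rightarrow> nat) \<Rightarrow> 'v set list \<Rightarrow> 'v set" where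
  "prod_generators n mul s As =
     {mul (map (\<lambda>r. xs ! s r) [0..<n]) | xs. length xs = n \<and> (\<forall>r<n. xs ! r \<in> As ! r)}"

lemma prodS_eq_span_prod_generators:
  "prodS scale n mul s As = module.span scale (prod_generators n mul s As)"
  by (simp add: prodS_def prod_generators_def)

lemma prod_generators_comp_permutes_subset:
  assumes t: "t permutes {..<n}" and s: "s permutes {..<n}" and len: "length As = n"
  shows "prod_generators n mul (t \<circ> s) As \<subseteq> prod_generators n mul s (permute_list t As)"
proof
  fix z assume "z \<in> prod_generators n mul (t \<circ> s) As"
  then obtain xs where z: "z = mul (map (\<lambda>r. xs ! t (s r)) [0..<n])"
    and lxs: "length xs = n" and xs: "\<forall>r<n. xs ! r \<in> As ! r"
    unfolding prod_generators_def by auto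
  have t': "t permutes {..<length xs}" and tAs: "t permutes {..<length As}"
    using t lxs len by simp_all
  have "z = mul (map (\<lambda>r. permute_list t xs ! s r) [0..<n])"
    unfolding z using permutes_in_image[OF s]
    by (intro arg_cong[where f = mul] map_cong) (simp_all add: permute_list_nth[OF t'] lxs)
  moreover have "\<forall>r<n. permute_list t xs ! r \<in> permute_list t As ! r"
    using xs permutes_in_image[OF t]
    by (simp add: permute_list_nth[OF t'] permute_list_nth[OF tAs] lxs len)
  ultimately show "z \<in> prod_generators n mul s (permute_list t As)"
    unfolding prod_generators_def using lxs by auto
qed

lemma prodS_comp_permutes:
  assumes t: "t permutes {..<n}" and s: "s permutes {..<n}" and len: "length As = n"
  shows "prodS scale n mul (t \<circ> s) As = prodS scale n mul s (permute_list t As)"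
proof -
  have inv_t: "inv t permutes {..<length (permute_list t As)}"
    using len by (simp add: permutes_inv[OF t])
  have "prod_generators n mul s (permute_list t As)
      = prod_generators n mul (inv t \<circ> (t \<circ> s)) (permute_list t As)"
    by (simp only: o_assoc permutes_inv_o(2)[OF t] id_o)
  also have "\<dots> \<subseteq> prod_generators n mul (t \<circ> s) (permute_list (inv t) (permute_list t As))"
    using inv_t len by (intro prod_generators_comp_permutes_subset permutes_compose[OF s t]) simp_all
  also have "permute_list (inv t) (permute_list t As) = permute_list (t \<circ> inv t) As"
    using inv_t len by (simp only: permute_list_compose length_permute_list)
  also have "\<dots> = As" by (simp only: permutes_inv_o(1)[OF t] permute_list_id)
  finally have "prod_generators n mul s (permute_list t As) \<subseteq> prod_generators n mul (t \<circ> s) As" .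
  with prod_generators_comp_permutes_subset[OF t s len]
  have "prod_generators n mul (t \<circ> s) As = prod_generators n mul s (permute_list t As)"
    by (rule subset_antisym)
  then show ?thesis by (simp only: prodS_eq_span_prod_generators)
qed

lemma permute_list_transpose_0_1: "permute_list (transpose 0 1) (a # b # xs) = b # a # xs"
proof (rule nth_equalityI)
  have "transpose 0 1 permutes {..<length (a # b # xs)}" by (intro permutes_swap_id) auto
  moreover fix i assume "i < length (permute_list (transpose 0 1) (a # b # xs))"
  ultimately have "permute_list (transpose 0 1) (a # b # xs) ! i = (a # b # xs) ! transpose 0 1 i"
    by (simp add: permute_list_nth)
  then show "permute_list (transpose 0 1) (a # b # xs) ! i = (b # a # xs) ! i"
    by (cases i; cases "i - 1") (simp_all add: transpose_def)
qed simp

lemma aS_comp_permutes: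
  assumes t: "t permutes {..<n}" and s: "s permutes {..<n}" and len: "length js = n"
  shows "aS scale n mul V e (t \<circ> s) js = aS scale n mul V e s (permute_list t js)"
proof -
  have "permute_list t (map (uset V e) js) = map (uset V e) (permute_list t js)"
    using t len by (intro permute_list_map) simp
  then have "prodS scale n mul (t \<circ> s) (map (uset V e) js)
      = prodS scale n mul s (map (uset V e) (permute_list t js))"
    using prodS_comp_permutes[OF t s, of "map (uset V e) js"] len by simp
  then show ?thesis by (simp only: aS_def)
qed

lemma span_singleton_inter_span_singleton:
  assumes vs: "vector_space scale"
    and ind: "\<not> module.dependent scale (range e)" and inj: "inj e" and ne: "r \<noteq> r'"
  shows "module.span scale {e r} \<inter> module.span scale {e r'} = {0}"
proof -
  interpret vector_space scale by (rule vs)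
  have "x = 0" if x: "x \<in> span {e r}" "x \<in> span {e r'}" for x
  proof (rule ccontr)
    assume "x \<noteq> 0"
    obtain a where a: "x = scale a (e r)" using x(1) span_singleton by auto
    obtain b where b: "x = scale b (e r')" using x(2) span_singleton by auto
    have "a \<noteq> 0" using a \<open>x \<noteq> 0\<close> by auto
    then have "e r = scale (inverse a * b) (e r')"
      using a b by (metis scale_scale scale_one left_inverse)
    moreover have "e r' \<in> range e - {e r}" using inj ne by (auto dest: injD)
    ultimately have "e r \<in> span (range e - {e r})" by (metis span_base span_scale)
    then show False using ind unfolding dependent_def by auto
  qed
  then show ?thesis using span_zero by blast
qed

text \<open>A nonzero product cannot lie in two of the spaces \<open>V\<close> and \<open>span {e r}\<close>.\<close>

lemma aS_unique:
  assumes vs: "vector_space scale"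
    and ind: "\<not> module.dependent scale (range e)" and inj: "inj e"
    and VW: "V \<inter> module.span scale (range e) = {0}"
    and x: "x \<in> aS scale n mul V e s js" and y: "y \<in> aS scale n mul V e s js"
  shows "x = y"
proof -
  interpret vector_space scale by (rule vs)
  define P where "P = prodS scale n mul s (map (uset V e) js)"
  have in_aS: "P \<noteq> {0} \<and> P \<subseteq> (case z of Idx r \<Rightarrow> span {e r} | VV \<Rightarrow> V)"
    if "z \<in> aS scale n mul V e s js" for z
    using that unfolding aS_def P_def Let_def by (cases z) (auto split: if_splits)
  have "0 \<in> P" unfolding P_def prodS_def by (rule span_zero)
  then obtain p where p: "p \<in> P" "p \<noteq> 0" using in_aS[OF x] by blast
  then have p_in: "p \<in> (case z of Idx r \<Rightarrow> span {e r} | VV \<Rightarrow> V)"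
    if "z \<in> aS scale n mul V e s js" for z
    using in_aS[OF that] by blast
  have "span {e r} \<subseteq> span (range e)" for r by (rule span_mono) auto
  then show ?thesis
    using p_in[OF x] p_in[OF y] \<open>p \<noteq> 0\<close> VW span_singleton_inter_span_singleton[OF vs ind inj]
    by (cases x; cases y) fastforce+
qed

lemma muS_Pl_Tup_sym:
  assumes "vector_space scale"
    and "\<not> module.dependent scale (range e)" and "inj e"
    and "V \<inter> module.span scale (range e) = {0}"
    and x: "x \<in> muS scale n mul V e (Pl j) (Tup js)"
  shows "j \<in> muS scale n mul V e (Pl x) (BTup js)"
proof -
  obtain s where s: "s \<in> perms n" and "x \<in> aS scale n mul V e s (j # js)" using x by auto
  then have "aS scale n mul V e s (j # js) = {x}" using aS_unique[OF assms(1-4)] by blast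
  with s show ?thesis by (auto simp: bS_def)
qed

lemma muS_Pl_BTup_sym:
  "x \<in> muS scale n mul V e (Pl j) (BTup js) \<Longrightarrow> j \<in> muS scale n mul V e (Pl x) (Tup js)"
  by (auto simp: bS_def)

lemma muS_Br_Tup_sym:
  assumes n: "2 \<le> n" and len: "length js = n - 1"
    and x: "x \<in> muS scale n mul V e (Br j) (Tup js)"
  shows "j \<in> muS scale n mul V e (Br x) (Tup js)"
proof -
  obtain k s where k: "k < n - 1" and s: "s permutes {..<n}"
    and xj: "aS scale n mul V e s (x # j # take k js @ drop (Suc k) js) = {js ! k}"
    using x by (auto simp: bS_def perms_def)
  let ?t = "transpose (0::nat) 1"
  have t: "?t permutes {..<n}" using n by (intro permutes_swap_id) auto
  have "length (j # x # take k js @ drop (Suc k) js) = n" using n k len by simp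
  then have "aS scale n mul V e (?t \<circ> s) (j # x # take k js @ drop (Suc k) js)
      = aS scale n mul V e s (permute_list ?t (j # x # take k js @ drop (Suc k) js))"
    by (rule aS_comp_permutes[OF t s])
  also have "\<dots> = {js ! k}" by (simp only: permute_list_transpose_0_1 xj)
  finally have "j \<in> bS scale n mul V e (?t \<circ> s) (js ! k) (x # take k js @ drop (Suc k) js)"
    by (simp add: bS_def)
  moreover have "?t \<circ> s \<in> perms n" using permutes_compose[OF s t] by (simp add: perms_def)
  ultimately show ?thesis using k by auto
qed

definition connected_step :: "('k::field \<Rightarrow> 'v::ab_group_add \<Rightarrow> 'v) \<Rightarrow> nat \<Rightarrow> ('v list \<Rightarrow> 'v)
    \<Rightarrow> 'v set \<Rightarrow> ('i \<Rightarrow> 'v) \<Rightarrow> 'i \<Rightarrow> 'i \<Rightarrow> bool" where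
  "connected_step scale n mul V e r r' \<longleftrightarrow>
     (\<exists>X jj. tuplen X = n - 1 \<and> jj \<in> {Pl r, Br r} \<and>
        Idx r' \<in> muS scale n mul V e (map_barred Idx jj) X)"

lemma symp_connected_step:
  assumes "vector_space scale"
    and "\<not> module.dependent scale (range e)" and "inj e"
    and "V \<inter> module.span scale (range e) = {0}"
    and n: "2 \<le> n"
  shows "symp (connected_step scale n mul V e)"
proof (rule sympI)
  fix r r' assume "connected_step scale n mul V e r r'"
  then obtain X jj where len: "tuplen X = n - 1" and jj: "jj \<in> {Pl r, Br r}"
    and r': "Idx r' \<in> muS scale n mul V e (map_barred Idx jj) X"
    unfolding connected_step_def by blast
  consider js where "X = Tup js" "jj = Pl r" | js where "X = Tup js" "jj = Br r"
    | js where "X = BTup js" "jj = Pl r"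
    using jj r' by (cases X) auto
  then show "connected_step scale n mul V e r' r"
  proof cases
    case 1
    with r' have "Idx r \<in> muS scale n mul V e (Pl (Idx r')) (BTup js)"
      using muS_Pl_Tup_sym[OF assms(1-4)] by simp
    with len show ?thesis unfolding connected_step_def 1
      by (intro exI[of _ "BTup js"] exI[of _ "Pl r'"]) simp
  next
    case 2
    with r' len have "Idx r \<in> muS scale n mul V e (Br (Idx r')) (Tup js)"
      using muS_Br_Tup_sym[OF n] by simp
    with len show ?thesis unfolding connected_step_def 2
      by (intro exI[of _ "Tup js"] exI[of _ "Br r'"]) simp
  next
    case 3
    with r' have "Idx r \<in> muS scale n mul V e (Pl (Idx r')) (Tup js)"
      using muS_Pl_BTup_sym by simp
    with len show ?thesis unfolding connected_step_def 3
      by (intro exI[of _ "Tup js"] exI[of _ "Pl r'"]) simp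
  qed
qed

fun unbar :: "'a barred \<Rightarrow> 'a" where
  "unbar (Pl x) = x"
| "unbar (Br x) = x"

lemma mem_phiS_iff:
  "y \<in> phiS scale n mul V e J X \<longleftrightarrow> (\<exists>jj\<in>J. Idx (unbar y) \<in> muS scale n mul V e (map_barred Idx jj) X)"
  unfolding phiS_def Let_def by (cases y) auto

lemma phi_iter_snoc:
  "phi_iter scale n mul V e J (Xs @ [X]) = phiS scale n mul V e (phi_iter scale n mul V e J Xs) X"
  by (induction Xs arbitrary: J) auto

lemma phi_iter_reachable:
  assumes "\<forall>X\<in>set Xs. tuplen X = n - 1" and "x \<in> phi_iter scale n mul V e J Xs"
  shows "\<exists>y\<in>J. (connected_step scale n mul V e)\<^sup>*\<^sup>* (unbar y) (unbar x)"
  using assms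
proof (induction Xs arbitrary: J)
  case Nil
  then show ?case by auto
next
  case (Cons X Xs)
  then obtain y where "y \<in> phiS scale n mul V e J X"
    and y_x: "(connected_step scale n mul V e)\<^sup>*\<^sup>* (unbar y) (unbar x)" by auto
  then obtain jj where jj: "jj \<in> J" "Idx (unbar y) \<in> muS scale n mul V e (map_barred Idx jj) X"
    unfolding mem_phiS_iff by blast
  have "connected_step scale n mul V e (unbar jj) (unbar y)"
    unfolding connected_step_def using jj Cons.prems(1)
    by (intro exI[of _ X] exI[of _ jj]) (cases jj; simp)
  with jj(1) y_x show ?case by (meson converse_rtranclp_into_rtranclp)
qed

text \<open>Reaching both \<open>Pl j\<close> and \<open>Br j\<close> lets the chain be continued by a step of either kind,
  which is what makes the induction go through.\<close>

lemma phi_iter_of_tranclp_connected_step: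
  assumes "(connected_step scale n mul V e)\<^sup>+\<^sup>+ i j"
  shows "\<exists>Xs it. Xs \<noteq> [] \<and> (\<forall>X\<in>set Xs. tuplen X = n - 1) \<and> it \<in> {Pl i, Br i} \<and>
     (\<forall>s. 1 \<le> s \<and> s \<le> length Xs \<longrightarrow> phi_iter scale n mul V e {it} (take s Xs) \<noteq> {}) \<and>
     Pl j \<in> phi_iter scale n mul V e {it} Xs \<and> Br j \<in> phi_iter scale n mul V e {it} Xs"
  using assms
proof (induction rule: tranclp_induct)
  case (base j)
  then obtain X jj where X: "tuplen X = n - 1" "jj \<in> {Pl i, Br i}"
      "Idx j \<in> muS scale n mul V e (map_barred Idx jj) X"
    unfolding connected_step_def by blast
  then have "Pl j \<in> phiS scale n mul V e {jj} X" "Br j \<in> phiS scale n mul V e {jj} X"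
    by (auto simp: mem_phiS_iff)
  with X show ?case by (intro exI[of _ "[X]"] exI[of _ jj]) (auto simp: le_Suc_eq)
next
  case (step j k)
  then obtain Xs it where IH: "Xs \<noteq> []" "\<forall>X\<in>set Xs. tuplen X = n - 1" "it \<in> {Pl i, Br i}"
     "\<forall>s. 1 \<le> s \<and> s \<le> length Xs \<longrightarrow> phi_iter scale n mul V e {it} (take s Xs) \<noteq> {}"
     "Pl j \<in> phi_iter scale n mul V e {it} Xs" "Br j \<in> phi_iter scale n mul V e {it} Xs"
    by blast
  obtain X jj where X: "tuplen X = n - 1" "jj \<in> {Pl j, Br j}"
      "Idx k \<in> muS scale n mul V e (map_barred Idx jj) X"
    using step(2) unfolding connected_step_def by blast
  have "jj \<in> phi_iter scale n mul V e {it} Xs" using X(2) IH by auto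
  with X have k: "Pl k \<in> phi_iter scale n mul V e {it} (Xs @ [X])"
    "Br k \<in> phi_iter scale n mul V e {it} (Xs @ [X])"
    unfolding phi_iter_snoc mem_phiS_iff by auto
  have "phi_iter scale n mul V e {it} (take s (Xs @ [X])) \<noteq> {}"
    if "1 \<le> s" "s \<le> length (Xs @ [X])" for s
    using IH(4) that k by (cases "s \<le> length Xs") (auto simp: le_Suc_eq)
  with IH X k show ?case by (intro exI[of _ "Xs @ [X]"] exI[of _ it]) auto
qed

lemma connected_eq_rtranclp_connected_step:
  "connected scale n mul V e = (connected_step scale n mul V e)\<^sup>*\<^sup>*"
proof (intro ext iffI)
  fix i j
  assume "connected scale n mul V e i j"
  then consider "i = j"
    | Xs it where "\<forall>X\<in>set Xs. tuplen X = n - 1" "it \<in> {Pl i, Br i}"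
        "Pl j \<in> phi_iter scale n mul V e {it} Xs"
    unfolding connected_def by blast
  then show "(connected_step scale n mul V e)\<^sup>*\<^sup>* i j"
  proof cases
    case 2
    then show ?thesis
      using phi_iter_reachable[of Xs n "Pl j" scale mul V e "{it}"] by auto
  qed simp
next
  fix i j
  assume "(connected_step scale n mul V e)\<^sup>*\<^sup>* i j"
  then consider "i = j" | "(connected_step scale n mul V e)\<^sup>+\<^sup>+ i j"
    by (blast dest: rtranclpD)
  then show "connected scale n mul V e i j"
  proof cases
    case 2
    from phi_iter_of_tranclp_connected_step[OF this] obtain Xs it where
      "Xs \<noteq> []" "\<forall>X\<in>set Xs. tuplen X = n - 1" "it \<in> {Pl i, Br i}"
      "\<forall>s. 1 \<le> s \<and> s \<le> length Xs \<longrightarrow> phi_iter scale n mul V e {it} (take s Xs) \<noteq> {}"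
      "Pl j \<in> phi_iter scale n mul V e {it} Xs"
      by blast
    then show ?thesis unfolding connected_def by (blast intro: less_imp_le_nat)
  qed (simp add: connected_def)
qed

theorem proposition3p5:
  fixes scale :: "'k::field \<Rightarrow> 'v::ab_group_add \<Rightarrow> 'v"
    and Lg :: "'g::ab_group_add \<Rightarrow> 'v set"
    and eps :: "'g \<Rightarrow> 'g \<Rightarrow> 'k"
    and n :: nat
    and mul :: "'v list \<Rightarrow> 'v"
    and alpha :: "nat \<Rightarrow> nat \<Rightarrow> nat \<Rightarrow> (nat \<Rightarrow> nat) \<Rightarrow> (nat \<Rightarrow> nat) \<Rightarrow> 'k"
    and V W :: "'v set"
    and e :: "'i \<Rightarrow> 'v"
  assumes "bicharacter eps"
    and "color_gLt_algebra scale Lg eps n mul alpha"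
    and "quasi_mult_basis scale Lg n mul V W e"
  shows "equivp (connected scale n mul V e)"
proof -
  have vs: "vector_space scale" and n: "2 \<le> n"
    using assms(2) unfolding color_gLt_algebra_def graded_nary_algebra_def by auto
  have "\<not> module.dependent scale (range e)" and "inj e"
    and "V \<inter> module.span scale (range e) = {0}"
    using assms(3) unfolding quasi_mult_basis_def by auto
  with vs n have "symp (connected_step scale n mul V e)" by (intro symp_connected_step)
  then show ?thesis unfolding connected_eq_rtranclp_connected_step by (rule equivp_rtranclp)
qed

end
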